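(* Let $S=\{f_1,\dots,f_n\}$ be a finite set of polynomials in $\mathbb{Q}[\alpha_1,\dots,\alpha_r]$ and let $\sigma$ be a permutation of $\{\alpha_1,\dots,\alpha_r\}$. If $S$ is compatibility graph reducible with respect to $\sigma$, then every subset $L\subseteq S$ is compatibility graph reducible with respect to $\sigma$.
   Context: A polynomial is called linear in a variable $x$ if its degree in $x$ is at most one (it may be constant in $x$). One reduction step. Let $T=\{f_1,\dots,f_m\}$ be a finite set of polynomials with rational coefficients, together with a graph $C$ on vertex set $T$ (its compatibility graph), and let $x$ be a variable. If some $f_i$ is not linear in $x$, the step is undefined. Otherwise write $f_i=g_ix+h_i$ with $g_i=\partial f_i/\partial x$ and $h_i=f_i|_{x=0}$. Let $S^1=\{g_i\}$, $S^2=\{h_i\}$, $S^3=\{g_ih_j-h_ig_j : i\neq j,\ f_if_j\in E(C)\}$, and let $T_{(x)}$ be the set of irreducible factors over $\mathbb{Q}$ of the polynomials in $S^1\cup S^2\cup S^3$. Each $q\in T_{(x)}$ receives a set of labels (2-element sets): the label $\{0,i\}$ if $q$ is an irreducible factor of $g_i$; the label $\{i,\infty\}$ if $q$ is an irreducible factor of $h_i$, and additionally the label $\{0,i\}$ if moreover $h_i=f_i$; the label $\{i,j\}$ if $q$ is an irreducible factor of $g_ih_j-h_ig_j\in S^3$. The new compatibility graph $C_{(x)}$ on vertex set $T_{(x)}$ has $qq'$ as an edge iff some label of $q$ and some label of $q'$ have nonempty intersection. Full reduction. Let $S\subseteq\mathbb{Q}[\alpha_1,\dots,\alpha_r]$ be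 finite and $\sigma$ a permutation of the variables; write $\sigma(i)$ for the $i$-th variable in the order. Let $(S_{[\sigma(1)]},C_{[\sigma(1)]})$ be the result of one reduction step with variable $\sigma(1)$ applied to $S$ with the complete graph as compatibility graph. For $k\ge 2$ define inductively $S_{[\sigma(1),\dots,\sigma(k)]}=\bigcap_{1\le i\le k} S_{[\sigma(1),\dots,\widehat{\sigma(i)},\dots,\sigma(k)](\sigma(i))}$, where the subscript $(\sigma(i))$ means one reduction step with variable $\sigma(i)$ applied to the set $S_{[\sigma(1),\dots,\widehat{\sigma(i)},\dots,\sigma(k)]}$ with its compatibility graph; in these intersections polynomials differing by a nonzero constant factor are identified. The compatibility graph $C_{[\sigma(1),\dots,\sigma(k)]}$ has $fg$ as an edge iff $fg$ is an edge of every $C_{[\sigma(1),\dots,\widehat{\sigma(i)},\dots,\sigma(k)](\sigma(i))}$. $S$ is compatibility graph reducible with respect to $\sigma$ if for all $1\le i\le r-1$ the set $S_{[\sigma(1),\dots,\sigma(i)]}$ is defined and all its polynomials are linear in $\sigma(i+1)$. *)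

theory Defs
  imports Complex_Main "HOL-Library.Poly_Mapping" "HOL-Computational_Algebra.Factorial_Ring"
begin

text \<open>A polynomial in the variables alpha_0, alpha_1, ... (variables are natural numbers) is a
  finitely supported map from monomials (exponent vectors nat =>0 nat) to rational coefficients.\<close>

type_synonym mpoly = "(nat \<Rightarrow>\<^sub>0 nat) \<Rightarrow>\<^sub>0 rat"

definition mvars :: "mpoly \<Rightarrow> nat set" where
  "mvars f = (\<Union>m\<in>Poly_Mapping.keys f. Poly_Mapping.keys m)"

definition linear_in :: "nat \<Rightarrow> mpoly \<Rightarrow> bool" where
  "linear_in x f \<longleftrightarrow> (\<forall>m\<in>Poly_Mapping.keys f. Poly_Mapping.lookup m x \<le> 1)"

lift_definition pdiff :: "nat \<Rightarrow> mpoly \<Rightarrow> mpoly" is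
  "\<lambda>x f m. of_nat (Poly_Mapping.lookup m x + 1) * Poly_Mapping.lookup f (m + Poly_Mapping.single x 1)"
proof -
  fix x :: nat and f :: mpoly
  let ?e = "Poly_Mapping.single x (1::nat)"
  have "{m. of_nat (Poly_Mapping.lookup m x + 1) * Poly_Mapping.lookup f (m + ?e) \<noteq> (0::rat)} \<subseteq> (\<lambda>k. k - ?e) ` Poly_Mapping.keys f"
  proof
    fix m assume "m \<in> {m. of_nat (Poly_Mapping.lookup m x + 1) * Poly_Mapping.lookup f (m + ?e) \<noteq> (0::rat)}"
    then have "m + ?e \<in> Poly_Mapping.keys f" by (simp add: in_keys_iff)
    moreover have "m = (m + ?e) - ?e" by simp
    ultimately show "m \<in> (\<lambda>k. k - ?e) ` Poly_Mapping.keys f" by (rule rev_image_eqI)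
  qed
  then show "finite {m. of_nat (Poly_Mapping.lookup m x + 1) * Poly_Mapping.lookup f (m + ?e) \<noteq> (0::rat)}"
    by (rule finite_surj[OF finite_keys])
qed

lift_definition subst0 :: "nat \<Rightarrow> mpoly \<Rightarrow> mpoly" is
  "\<lambda>x f m. if Poly_Mapping.lookup m x = 0 then Poly_Mapping.lookup f m else 0"
proof -
  fix x :: nat and f :: mpoly
  have "{m. (if Poly_Mapping.lookup m x = 0 then Poly_Mapping.lookup f m else 0) \<noteq> (0::rat)} \<subseteq> Poly_Mapping.keys f"
    by (auto simp: in_keys_iff split: if_splits)
  then show "finite {m. (if Poly_Mapping.lookup m x = 0 then Poly_Mapping.lookup f m else 0) \<noteq> (0::rat)}"
    by (rule finite_subset[OF _ finite_keys])
qed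

text \<open>Canonical representative of the class of a nonzero polynomial modulo nonzero
  rational constants: divide by the coefficient of the largest monomial.  This realises
  the identification of polynomials differing by a nonzero constant factor.\<close>
definition normp :: "mpoly \<Rightarrow> mpoly" where
  "normp f = Poly_Mapping.single 0 (inverse (Poly_Mapping.lookup f (Max (Poly_Mapping.keys f)))) * f"

definition irr_factors :: "mpoly \<Rightarrow> mpoly set" where
  "irr_factors p = {normp q | q. p \<noteq> 0 \<and> irreducible q \<and> q dvd p}"

text \<open>A polynomial set with compatibility graph: vertex set T and edge relation E
  (symmetric; only pairs of distinct vertices of T are relevant).\<close>
type_synonym pset = "mpoly set \<times> (mpoly \<times> mpoly) set"

datatype lab = LZero | LInf | LIdx mpoly

definition complete_graph :: "mpoly set \<Rightarrow> (mpoly \<times> mpoly) set" where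
  "complete_graph S = {(f, g). f \<in> S \<and> g \<in> S \<and> f \<noteq> g}"

definition S3 :: "nat \<Rightarrow> pset \<Rightarrow> mpoly set" where
  "S3 x TC = {pdiff x fi * subst0 x fj - subst0 x fi * pdiff x fj | fi fj.
      fi \<in> fst TC \<and> fj \<in> fst TC \<and> fi \<noteq> fj \<and> (fi, fj) \<in> snd TC}"

definition step_vertices :: "nat \<Rightarrow> pset \<Rightarrow> mpoly set" where
  "step_vertices x TC = \<Union> (irr_factors ` ((pdiff x ` fst TC) \<union> (subst0 x ` fst TC) \<union> S3 x TC))"

text \<open>labels of q; indices of the polynomials of T are the polynomials themselves\<close>
definition labels :: "nat \<Rightarrow> pset \<Rightarrow> mpoly \<Rightarrow> lab set set" where
  "labels x TC q =
     {{LZero, LIdx fi} | fi. fi \<in> fst TC \<and> q \<in> irr_factors (pdiff x fi)}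
   \<union> {{LIdx fi, LInf} | fi. fi \<in> fst TC \<and> q \<in> irr_factors (subst0 x fi)}
   \<union> {{LZero, LIdx fi} | fi. fi \<in> fst TC \<and> q \<in> irr_factors (subst0 x fi) \<and> subst0 x fi = fi}
   \<union> {{LIdx fi, LIdx fj} | fi fj. fi \<in> fst TC \<and> fj \<in> fst TC \<and> fi \<noteq> fj \<and> (fi, fj) \<in> snd TC
        \<and> q \<in> irr_factors (pdiff x fi * subst0 x fj - subst0 x fi * pdiff x fj)}"

definition step_edges :: "nat \<Rightarrow> pset \<Rightarrow> (mpoly \<times> mpoly) set" where
  "step_edges x TC = {(q, q'). q \<in> step_vertices x TC \<and> q' \<in> step_vertices x TC \<and> q \<noteq> q'
      \<and> (\<exists>l\<in>labels x TC q. \<exists>l'\<in>labels x TC q'. l \<inter> l' \<noteq> {})}"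

text \<open>one reduction step; None = undefined\<close>
definition red_step :: "nat \<Rightarrow> pset \<Rightarrow> pset option" where
  "red_step x TC = (if \<exists>f\<in>fst TC. \<not> linear_in x f then None
                    else Some (step_vertices x TC, step_edges x TC))"

definition del_nth :: "nat \<Rightarrow> 'a list \<Rightarrow> 'a list" where
  "del_nth i xs = take i xs @ drop (Suc i) xs"

definition combine :: "pset option list \<Rightarrow> pset option" where
  "combine rs = (if None \<in> set rs then None
     else Some (\<Inter> {fst (the r) | r. r \<in> set rs}, \<Inter> {snd (the r) | r. r \<in> set rs}))"

text \<open>red S n vs computes S_[vs] when length vs = n (n >= 1)\<close>
fun red :: "mpoly set \<Rightarrow> nat \<Rightarrow> nat list \<Rightarrow> pset option" where
  "red S 0 vs = None"
| "red S (Suc 0) vs = red_step (hd vs) (S, complete_graph S)"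
| "red S (Suc (Suc n)) vs =
     combine (map (\<lambda>i. Option.bind (red S (Suc n) (del_nth i vs)) (red_step (vs ! i)))
                  [0..<length vs])"

definition reduction :: "mpoly set \<Rightarrow> nat list \<Rightarrow> pset option" where
  "reduction S vs = red S (length vs) vs"

text \<open>sigma is a permutation of the variables 0..r-1, given as the list
  [sigma(1), ..., sigma(r)] (0-based: sigma ! 0 = sigma(1)).\<close>
definition is_var_perm :: "nat \<Rightarrow> nat list \<Rightarrow> bool" where
  "is_var_perm r \<sigma> \<longleftrightarrow> length \<sigma> = r \<and> distinct \<sigma> \<and> set \<sigma> = {..<r}"

definition cg_reducible :: "mpoly set \<Rightarrow> nat list \<Rightarrow> bool" where
  "cg_reducible S \<sigma> \<longleftrightarrow>
     (\<forall>i. 1 \<le> i \<and> i \<le> length \<sigma> - 1 \<longrightarrow>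
        (\<exists>TC. reduction S (take i \<sigma>) = Some TC \<and> (\<forall>f\<in>fst TC. linear_in (\<sigma> ! i) f)))"

end

theory Submission
  imports Defs "HOL-Library.Product_Order"
begin

text \<open>Every ingredient of the reduction is monotone in the input: shrinking the polynomial set
  and its compatibility graph can only shrink the sets S1, S2, S3, hence the irreducible factors,
  their labels and the new edges, and it can only remove obstructions to linearity.  So by induction
  on the number of variables, the reduction of a subset L of S is defined whenever that of S is,
  and is contained in it; linearity in the next variable is inherited.  Vertex set and edge set are
  compared componentwise, i.e. in the product order on pset.\<close>

definition defined_below :: "'a::order option \<Rightarrow> 'a option \<Rightarrow> bool" where
  "defined_below a b \<longleftrightarrow> (\<forall>B. b = Some B \<longrightarrow> (\<exists>A. a = Some A \<and> A \<le> B))"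

lemma defined_belowD:
  "defined_below a (Some B) \<Longrightarrow> \<exists>A. a = Some A \<and> A \<le> B"
  unfolding defined_below_def by blast

lemma defined_below_bind:
  assumes "defined_below a b" and "\<And>A B. A \<le> B \<Longrightarrow> defined_below (f A) (g B)"
  shows "defined_below (Option.bind a f) (Option.bind b g)"
  using assms unfolding defined_below_def by (cases b) fastforce+

lemma S3_mono: "P \<le> Q \<Longrightarrow> S3 x P \<subseteq> S3 x Q"
  unfolding S3_def less_eq_prod_def by blast

lemma step_vertices_mono: "P \<le> Q \<Longrightarrow> step_vertices x P \<subseteq> step_vertices x Q"
  using S3_mono[of P Q x] unfolding step_vertices_def less_eq_prod_def by blast

lemma labels_mono: "P \<le> Q \<Longrightarrow> labels x P q \<subseteq> labels x Q q"
  unfolding labels_def less_eq_prod_def by blast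

lemma step_edges_mono: "P \<le> Q \<Longrightarrow> step_edges x P \<subseteq> step_edges x Q"
  using step_vertices_mono[of P Q x] labels_mono[of P Q x] unfolding step_edges_def by blast

lemma red_step_mono: "P \<le> Q \<Longrightarrow> defined_below (red_step x P) (red_step x Q)"
  using step_vertices_mono[of P Q x] step_edges_mono[of P Q x]
  unfolding defined_below_def red_step_def less_eq_prod_def by auto

lemma combine_eq_Inf: "None \<notin> set rs \<Longrightarrow> combine rs = Some (Inf (the ` set rs))"
  unfolding combine_def Inf_prod_def by (simp add: Setcompr_eq_image image_image)

lemma combine_mono:
  assumes "list_all2 defined_below as bs"
  shows "defined_below (combine as) (combine bs)"
  unfolding defined_below_def
proof (intro allI impI)
  fix Q assume Q: "combine bs = Some Q"
  then have bs_defined: "None \<notin> set bs"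
    unfolding combine_def by (auto split: if_splits)
  have below: "\<exists>a\<in>set as. the a \<le> the b" if "b \<in> set bs" for b
  proof -
    obtain i where i: "i < length bs" "b = bs ! i"
      using \<open>b \<in> set bs\<close> by (metis in_set_conv_nth)
    obtain B where "b = Some B"
      using \<open>b \<in> set bs\<close> bs_defined by (metis not_None_eq)
    moreover have "defined_below (as ! i) b"
      using i assms by (simp add: list_all2_conv_all_nth)
    ultimately obtain A where "as ! i = Some A" "A \<le> B"
      by (blast dest: defined_belowD)
    moreover have "as ! i \<in> set as"
      using i assms by (simp add: list_all2_conv_all_nth)
    ultimately show ?thesis using \<open>b = Some B\<close> by (intro bexI[of _ "Some A"]) simp_all
  qed
  have as_defined: "None \<notin> set as"
  proof
    assume "None \<in> set as"
    then obtain i where "i < length as" "as ! i = None" by (metis in_set_conv_nth)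
    moreover have "defined_below (as ! i) (bs ! i)" "bs ! i \<in> set bs"
      using \<open>i < length as\<close> assms by (auto simp: list_all2_conv_all_nth)
    ultimately show False
      using bs_defined unfolding defined_below_def by (cases "bs ! i") auto
  qed
  have "Inf (the ` set as) \<le> Inf (the ` set bs)"
    by (rule Inf_mono) (use below in blast)
  then show "\<exists>P. combine as = Some P \<and> P \<le> Q"
    using Q combine_eq_Inf[OF as_defined] combine_eq_Inf[OF bs_defined] by simp
qed

lemma red_mono: "L \<subseteq> S \<Longrightarrow> defined_below (red L n vs) (red S n vs)"
proof (induction S n vs rule: red.induct)
  case (1 S vs)
  then show ?case by (simp add: defined_below_def)
next
  case (2 S vs)
  then have "(L, complete_graph L) \<le> (S, complete_graph S)"
    unfolding complete_graph_def by auto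
  then show ?case by (simp add: red_step_mono)
next
  case (3 S n vs)
  have "defined_below (Option.bind (red L (Suc n) (del_nth i vs)) (red_step (vs ! i)))
                      (Option.bind (red S (Suc n) (del_nth i vs)) (red_step (vs ! i)))"
    if "i < length vs" for i
    using "3.IH"[of i] "3.prems" that by (intro defined_below_bind red_step_mono) auto
  then show ?case by (simp add: combine_mono list_all2_conv_all_nth)
qed

lemma cg_reducible_subset:
  assumes "L \<subseteq> S" and "cg_reducible S \<sigma>"
  shows "cg_reducible L \<sigma>"
  unfolding cg_reducible_def
proof (intro allI impI)
  fix i assume "1 \<le> i \<and> i \<le> length \<sigma> - 1"
  then obtain TC where TC: "reduction S (take i \<sigma>) = Some TC" "\<forall>f\<in>fst TC. linear_in (\<sigma> ! i) f"
    using assms(2) unfolding cg_reducible_def by blast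
  have "defined_below (reduction L (take i \<sigma>)) (reduction S (take i \<sigma>))"
    unfolding reduction_def using assms(1) by (rule red_mono)
  with TC(1) obtain P where "reduction L (take i \<sigma>) = Some P" "P \<le> TC"
    by (auto dest!: defined_belowD)
  with TC(2) show "\<exists>TC. reduction L (take i \<sigma>) = Some TC \<and> (\<forall>f\<in>fst TC. linear_in (\<sigma> ! i) f)"
    by (auto simp: less_eq_prod_def)
qed

theorem lemma3p2:
  fixes S :: "mpoly set" and r :: nat and \<sigma> :: "nat list"
  assumes "finite S"
    and "\<forall>f\<in>S. mvars f \<subseteq> {..<r}"
    and "is_var_perm r \<sigma>"
    and "cg_reducible S \<sigma>"
  shows "\<forall>L. L \<subseteq> S \<longrightarrow> cg_reducible L \<sigma>"
  using cg_reducible_subset assms(4) by blast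

end
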